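(* Let $G=(V,E)$ be an undirected graph with known non-negative edge weights such that all shortest paths are unique, $m=|E|$, and suppose the ordering of the (unknown, distinct) edge capacities is a uniformly random permutation of $\{1,\dots,m\}$. For $X\subseteq V$ let $f(X)$ be the expected number of edges revealed by the vantage point set $X$. Then $f$ is monotone and submodular: for all $X\subseteq V$ and $w\in V$, $f(X\cup\{w\})\ge f(X)$; and for all $X\subseteq Y\subseteq V$ and $w\in V$, $f(X\cup\{w\})-f(X)\ge f(Y\cup\{w\})-f(Y)$.
   Context: For vertices $s,t$, $P(s,t)$ denotes the unique shortest path from $s$ to $t$ with respect to the edge weights. An edge $e$ on $P(s,t)$ is a bottleneck edge of $P(s,t)$ if its capacity is strictly smaller than the capacity of every other edge of $P(s,t)$. Selecting a vertex $s$ as a vantage point reveals the bottleneck edge of $P(s,t)$ for every $t\in V\setminus\{s\}$; a set $X$ of vantage points reveals the union of the edges revealed by its members. *)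

theory Defs
  imports Complex_Main "HOL-Library.FuncSet"
begin

text \<open>Undirected graph: vertex set V (finite), edges E are 2-element subsets of V.
  Paths are simple paths given as nonempty vertex lists.\<close>

fun path_edges :: "'a list \<Rightarrow> 'a set set" where
  "path_edges (u # v # rest) = insert {u, v} (path_edges (v # rest))"
| "path_edges _ = {}"

definition is_path :: "'a set \<Rightarrow> 'a set set \<Rightarrow> 'a list \<Rightarrow> 'a \<Rightarrow> 'a \<Rightarrow> bool" where
  "is_path V E p s t \<longleftrightarrow> p \<noteq> [] \<and> hd p = s \<and> last p = t \<and> distinct p \<and>
     set p \<subseteq> V \<and> path_edges p \<subseteq> E"

definition path_weight :: "('a set \<Rightarrow> real) \<Rightarrow> 'a list \<Rightarrow> real" where
  "path_weight wt p = (\<Sum>e\<in>path_edges p. wt e)"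

definition is_shortest_path ::
  "'a set \<Rightarrow> 'a set set \<Rightarrow> ('a set \<Rightarrow> real) \<Rightarrow> 'a list \<Rightarrow> 'a \<Rightarrow> 'a \<Rightarrow> bool" where
  "is_shortest_path V E wt p s t \<longleftrightarrow> is_path V E p s t \<and>
     (\<forall>q. is_path V E q s t \<longrightarrow> path_weight wt p \<le> path_weight wt q)"

definition unique_shortest_paths :: "'a set \<Rightarrow> 'a set set \<Rightarrow> ('a set \<Rightarrow> real) \<Rightarrow> bool" where
  "unique_shortest_paths V E wt \<longleftrightarrow> (\<forall>s\<in>V. \<forall>t\<in>V. \<forall>p q.
     is_shortest_path V E wt p s t \<and> is_shortest_path V E wt q s t \<longrightarrow> p = q)"

definition is_bottleneck :: "('a set \<Rightarrow> nat) \<Rightarrow> 'a list \<Rightarrow> 'a set \<Rightarrow> bool" where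
  "is_bottleneck cap p e \<longleftrightarrow> e \<in> path_edges p \<and>
     (\<forall>e'\<in>path_edges p. e' \<noteq> e \<longrightarrow> cap e < cap e')"

definition revealed ::
  "'a set \<Rightarrow> 'a set set \<Rightarrow> ('a set \<Rightarrow> real) \<Rightarrow> ('a set \<Rightarrow> nat) \<Rightarrow> 'a set \<Rightarrow> 'a set set" where
  "revealed V E wt cap X = {e. \<exists>s\<in>X. \<exists>t\<in>V - {s}. \<exists>p.
     is_shortest_path V E wt p s t \<and> is_bottleneck cap p e}"

text \<open>All orderings of the capacities: bijections E \<rightarrow> {1..m}, uniformly distributed.\<close>
definition capacity_orders :: "'a set set \<Rightarrow> ('a set \<Rightarrow> nat) set" where
  "capacity_orders E = {cap \<in> E \<rightarrow>\<^sub>E {1..card E}. bij_betw cap E {1..card E}}"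

definition expected_revealed ::
  "'a set \<Rightarrow> 'a set set \<Rightarrow> ('a set \<Rightarrow> real) \<Rightarrow> 'a set \<Rightarrow> real" where
  "expected_revealed V E wt X =
     (\<Sum>cap\<in>capacity_orders E. real (card (revealed V E wt cap X))) / real (card (capacity_orders E))"

end

theory Submission
  imports Defs
begin

text \<open>For a fixed capacity ordering the revealed edges of X are the union of the edges revealed
  by the single vantage points of X, so their number is a coverage function of X, and coverage
  functions are monotone and submodular. Both properties survive averaging over the orderings.\<close>

lemma card_Un_submodular:
  assumes "A \<subseteq> B" "finite B" "finite C"
  shows "card (B \<union> C) + card A \<le> card (A \<union> C) + card B"
proof -
  have "finite A" using assms(1,2) by (rule finite_subset)
  have "card (A \<union> C) + card (A \<inter> C) = card A + card C"
    using \<open>finite A\<close> \<open>finite C\<close> by (rule card_Un_Int[symmetric])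
  moreover have "card (B \<union> C) + card (B \<inter> C) = card B + card C"
    using assms(2,3) by (rule card_Un_Int[symmetric])
  moreover have "card (A \<inter> C) \<le> card (B \<inter> C)"
    using assms by (intro card_mono) auto
  ultimately show ?thesis by linarith
qed

lemma revealed_Un:
  "revealed V E wt cap (X \<union> Y) = revealed V E wt cap X \<union> revealed V E wt cap Y"
  unfolding revealed_def by blast

lemma revealed_mono:
  "X \<subseteq> Y \<Longrightarrow> revealed V E wt cap X \<subseteq> revealed V E wt cap Y"
  unfolding revealed_def by blast

lemma revealed_subset_edges: "revealed V E wt cap X \<subseteq> E"
  unfolding revealed_def is_shortest_path_def is_path_def is_bottleneck_def by blast

lemma finite_if_capacity_orders: "cap \<in> capacity_orders E \<Longrightarrow> finite E"
  unfolding capacity_orders_def using bij_betw_finite by blast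

lemma finite_revealed:
  "cap \<in> capacity_orders E \<Longrightarrow> finite (revealed V E wt cap X)"
  using finite_subset[OF revealed_subset_edges finite_if_capacity_orders] .

lemma card_revealed_mono:
  assumes "cap \<in> capacity_orders E" "X \<subseteq> Y"
  shows "card (revealed V E wt cap X) \<le> card (revealed V E wt cap Y)"
  using assms by (intro card_mono finite_revealed revealed_mono)

lemma card_revealed_submodular:
  assumes "cap \<in> capacity_orders E" "X \<subseteq> Y"
  shows "card (revealed V E wt cap (Y \<union> Z)) + card (revealed V E wt cap X)
    \<le> card (revealed V E wt cap (X \<union> Z)) + card (revealed V E wt cap Y)"
  unfolding revealed_Un
  using assms by (intro card_Un_submodular revealed_mono finite_revealed)

lemma expected_revealed_mono:
  assumes "X \<subseteq> Y"
  shows "expected_revealed V E wt X \<le> expected_revealed V E wt Y"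
  unfolding expected_revealed_def
  using assms card_revealed_mono by (intro divide_right_mono sum_mono) auto

lemma expected_revealed_submodular:
  assumes "X \<subseteq> Y"
  shows "expected_revealed V E wt (Y \<union> Z) + expected_revealed V E wt X
    \<le> expected_revealed V E wt (X \<union> Z) + expected_revealed V E wt Y"
proof -
  let ?n = "\<lambda>cap X. real (card (revealed V E wt cap X))"
  have "(\<Sum>cap\<in>capacity_orders E. ?n cap (Y \<union> Z) + ?n cap X)
      \<le> (\<Sum>cap\<in>capacity_orders E. ?n cap (X \<union> Z) + ?n cap Y)"
    using card_revealed_submodular[OF _ assms] by (intro sum_mono) (simp flip: of_nat_add)
  then show ?thesis
    unfolding expected_revealed_def sum.distrib add_divide_distrib[symmetric]
    by (intro divide_right_mono) simp_all
qed

theorem mainTheorem2: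
  fixes V :: "'a set" and E :: "'a set set" and wt :: "'a set \<Rightarrow> real"
  assumes "finite V"
    and "\<forall>e\<in>E. \<exists>u\<in>V. \<exists>v\<in>V. u \<noteq> v \<and> e = {u, v}"
    and "\<forall>e\<in>E. wt e \<ge> 0"
    and "unique_shortest_paths V E wt"
  defines "f \<equiv> expected_revealed V E wt"
  shows "(\<forall>X w. X \<subseteq> V \<and> w \<in> V \<longrightarrow> f (X \<union> {w}) \<ge> f X) \<and>
         (\<forall>X Y w. X \<subseteq> Y \<and> Y \<subseteq> V \<and> w \<in> V \<longrightarrow>
              f (X \<union> {w}) - f X \<ge> f (Y \<union> {w}) - f Y)"
proof -
  have "f X \<le> f (X \<union> {w})" for X w
    unfolding f_def by (intro expected_revealed_mono) blast
  moreover have "f (Y \<union> {w}) - f Y \<le> f (X \<union> {w}) - f X" if "X \<subseteq> Y" for X Y w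
    using expected_revealed_submodular[OF that, of V E wt "{w}"] unfolding f_def by linarith
  ultimately show ?thesis by blast
qed

end
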